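(* Under the standing assumptions in the context, the set of points $\epsilon\in\operatorname{int}(\mathcal{E})$ at which the primal optimal set mapping $\mathcal{P}^*$ or the dual optimal set mapping $\mathcal{D}^*$ fails to be Painlevé–Kuratowski continuous relative to $\operatorname{int}(\mathcal{E})$ has empty interior.
   Context: Let $\mathbb{S}^n$ denote the space of real symmetric $n\times n$ matrices with inner product $\langle C,X\rangle=\operatorname{trace}(CX)$; $X\succeq 0$ means positive semidefinite, $X\succ0$ positive definite. Fix $C,\bar C,A^1,\dots,A^m\in\mathbb{S}^n$, $b\in\mathbb{R}^m$. For $\epsilon\in\mathbb{R}$: $(P_\epsilon)$: $\inf\{\langle C+\epsilon\bar C,X\rangle:\langle A^i,X\rangle=b_i\ (i=1,\dots,m),\ X\succeq0\}$; $(D_\epsilon)$: $\sup\{b^Ty:\sum_i y_iA^i+S=C+\epsilon\bar C,\ S\succeq0\}$. Let $v(\epsilon)$ be the optimal value of $(P_\epsilon)$ and $\mathcal{E}=\{\epsilon:v(\epsilon)>-\infty\}$. Standing assumptions: $A^1,\dots,A^m$ are linearly independent, and there exist $X\succ0$ feasible for $(P_0)$ and $(y,S)$ with $S\succ0$ feasible for $(D_0)$. The optimal set mappings are $\mathcal{P}^*(\epsilon)$ = set of optimal solutions $X$ of $(P_\epsilon)$ and $\mathcal{D}^*(\epsilon)$ = set of optimal solutions $(y,S)$ of $(D_\epsilon)$. Painlevé–Kuratowski notions: for sets $\mathcal{C}_k$, $\limsup_k\mathcal{C}_k=\{\nu:\liminf_k\operatorname{dist}(\nu,\mathcal{C}_k)=0\}$,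 $\liminf_k\mathcal{C}_k=\{\nu:\limsup_k\operatorname{dist}(\nu,\mathcal{C}_k)=0\}$; a set-valued map $\Phi$ is outer semicontinuous at $\bar\xi$ relative to $\mathcal{X}$ if $\limsup_k\Phi(\xi_k)\subseteq\Phi(\bar\xi)$ for every sequence $\mathcal{X}\ni\xi_k\to\bar\xi$, inner semicontinuous if $\liminf_k\Phi(\xi_k)\supseteq\Phi(\bar\xi)$ for every such sequence, and continuous if both. *)

theory Defs
  imports "HOL-Analysis.Analysis"
begin

definition symmetric_mat :: "real^'n^'n \<Rightarrow> bool" where
  "symmetric_mat X \<longleftrightarrow> transpose X = X"

definition psd :: "real^'n^'n \<Rightarrow> bool" where
  "psd X \<longleftrightarrow> symmetric_mat X \<and> (\<forall>x. 0 \<le> x \<bullet> (X *v x))"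

definition pd :: "real^'n^'n \<Rightarrow> bool" where
  "pd X \<longleftrightarrow> symmetric_mat X \<and> (\<forall>x. x \<noteq> 0 \<longrightarrow> 0 < x \<bullet> (X *v x))"

definition mat_inner :: "real^'n^'n \<Rightarrow> real^'n^'n \<Rightarrow> real" where
  "mat_inner C X = trace (C ** X)"

definition primal_feasible :: "('m::finite \<Rightarrow> real^'n^'n) \<Rightarrow> real^'m \<Rightarrow> (real^'n^'n) set" where
  "primal_feasible A b = {X. (\<forall>i. mat_inner (A i) X = b $ i) \<and> psd X}"

text \<open>Optimal value v(eps) of (P_eps), in the extended reals (+infinity if infeasible).\<close>
definition primal_value ::
  "real^'n^'n \<Rightarrow> real^'n^'n \<Rightarrow> ('m::finite \<Rightarrow> real^'n^'n) \<Rightarrow> real^'m \<Rightarrow> real \<Rightarrow> ereal" where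
  "primal_value C Cb A b eps =
     (INF X\<in>primal_feasible A b. ereal (mat_inner (C + eps *\<^sub>R Cb) X))"

definition finite_value_set ::
  "real^'n^'n \<Rightarrow> real^'n^'n \<Rightarrow> ('m::finite \<Rightarrow> real^'n^'n) \<Rightarrow> real^'m \<Rightarrow> real set" where
  "finite_value_set C Cb A b = {eps. primal_value C Cb A b eps > -\<infinity>}"

definition primal_opt ::
  "real^'n^'n \<Rightarrow> real^'n^'n \<Rightarrow> ('m::finite \<Rightarrow> real^'n^'n) \<Rightarrow> real^'m \<Rightarrow> real \<Rightarrow> (real^'n^'n) set" where
  "primal_opt C Cb A b eps =
     {X \<in> primal_feasible A b. \<forall>X'\<in>primal_feasible A b.
        mat_inner (C + eps *\<^sub>R Cb) X \<le> mat_inner (C + eps *\<^sub>R Cb) X'}"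

definition dual_feasible ::
  "real^'n^'n \<Rightarrow> real^'n^'n \<Rightarrow> ('m::finite \<Rightarrow> real^'n^'n) \<Rightarrow> real \<Rightarrow> ((real^'m) \<times> (real^'n^'n)) set" where
  "dual_feasible C Cb A eps =
     {(y, S). (\<Sum>i\<in>UNIV. y $ i *\<^sub>R A i) + S = C + eps *\<^sub>R Cb \<and> psd S}"

definition dual_opt ::
  "real^'n^'n \<Rightarrow> real^'n^'n \<Rightarrow> ('m::finite \<Rightarrow> real^'n^'n) \<Rightarrow> real^'m \<Rightarrow> real \<Rightarrow> ((real^'m) \<times> (real^'n^'n)) set" where
  "dual_opt C Cb A b eps =
     {(y, S) \<in> dual_feasible C Cb A eps. \<forall>(y', S')\<in>dual_feasible C Cb A eps. b \<bullet> y' \<le> b \<bullet> y}"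

text \<open>Painleve--Kuratowski limits, with dist(x, empty) = +infinity.\<close>
definition set_dist_e :: "'a::metric_space \<Rightarrow> 'a set \<Rightarrow> ereal" where
  "set_dist_e x S = (INF s\<in>S. ereal (dist x s))"

definition PK_limsup :: "(nat \<Rightarrow> 'a::metric_space set) \<Rightarrow> 'a set" where
  "PK_limsup Cs = {x. liminf (\<lambda>k. set_dist_e x (Cs k)) = 0}"

definition PK_liminf :: "(nat \<Rightarrow> 'a::metric_space set) \<Rightarrow> 'a set" where
  "PK_liminf Cs = {x. limsup (\<lambda>k. set_dist_e x (Cs k)) = 0}"

definition outer_semicont_rel :: "('b::metric_space \<Rightarrow> 'a::metric_space set) \<Rightarrow> 'b set \<Rightarrow> 'b \<Rightarrow> bool" where
  "outer_semicont_rel Phi XX xi \<longleftrightarrow>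
     (\<forall>xs. (\<forall>k. xs k \<in> XX) \<and> xs \<longlonglongrightarrow> xi \<longrightarrow> PK_limsup (\<lambda>k. Phi (xs k)) \<subseteq> Phi xi)"

definition inner_semicont_rel :: "('b::metric_space \<Rightarrow> 'a::metric_space set) \<Rightarrow> 'b set \<Rightarrow> 'b \<Rightarrow> bool" where
  "inner_semicont_rel Phi XX xi \<longleftrightarrow>
     (\<forall>xs. (\<forall>k. xs k \<in> XX) \<and> xs \<longlonglongrightarrow> xi \<longrightarrow> Phi xi \<subseteq> PK_liminf (\<lambda>k. Phi (xs k)))"

definition PK_cont_rel :: "('b::metric_space \<Rightarrow> 'a::metric_space set) \<Rightarrow> 'b set \<Rightarrow> 'b \<Rightarrow> bool" where
  "PK_cont_rel Phi XX xi \<longleftrightarrow> outer_semicont_rel Phi XX xi \<and> inner_semicont_rel Phi XX xi"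

end

theory Submission
  imports Defs
begin

text \<open>Both optimal set mappings have closed graphs. For \<open>\<P>\<^sup>*\<close> this is immediate, since the
  feasible set does not depend on \<open>\<epsilon>\<close> and the objective is jointly continuous. For \<open>\<D>\<^sup>*\<close>
  the feasible set moves with \<open>\<epsilon>\<close>, but its graph is convex, and on a one-dimensional parameter
  space this suffices to approximate any dual feasible point at the limit parameter.

  A multifunction with closed graph into a Euclidean space is outer semicontinuous everywhere,
  and where it is not inner semicontinuous, the parameter lies on the frontier of one of the
  closed sets \<open>{s. F s \<inter> K \<noteq> {}}\<close>, \<open>K\<close> the closure of a small bounded set of a countable
  basis. These frontiers are nowhere dense, so by Baire's theorem the discontinuity points form
  a set of first category, which has empty interior in \<open>\<real>\<close>.\<close>

section \<open>Painleve--Kuratowski limits\<close>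

lemma set_dist_e_less_iff: "set_dist_e x S < ereal e \<longleftrightarrow> (\<exists>z\<in>S. dist x z < e)"
  unfolding set_dist_e_def by (simp add: INF_less_iff)

lemma set_dist_e_nonneg: "0 \<le> set_dist_e x S"
  unfolding set_dist_e_def by (auto intro!: INF_greatest simp: zero_ereal_def)

lemma mem_PK_limsup_iff:
  "x \<in> PK_limsup Cs \<longleftrightarrow> (\<forall>e>0. \<exists>\<^sub>F k in sequentially. \<exists>z\<in>Cs k. dist x z < e)"
proof -
  define f where "f = (\<lambda>k. set_dist_e x (Cs k))"
  have "liminf f = 0 \<longleftrightarrow> (\<forall>e>0. \<exists>\<^sub>F k in sequentially. f k < ereal e)"
  proof
    assume lim: "liminf f = 0"
    show "\<forall>e>0. \<exists>\<^sub>F k in sequentially. f k < ereal e"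
    proof (intro allI impI)
      fix e :: real assume "e > 0"
      show "\<exists>\<^sub>F k in sequentially. f k < ereal e"
      proof (rule ccontr)
        assume "\<not> (\<exists>\<^sub>F k in sequentially. f k < ereal e)"
        then have "\<forall>\<^sub>F k in sequentially. ereal e \<le> f k"
          by (simp add: not_frequently not_less)
        then have "ereal e \<le> liminf f" by (rule Liminf_bounded)
        with lim \<open>e > 0\<close> show False by simp
      qed
    qed
  next
    assume freq: "\<forall>e>0. \<exists>\<^sub>F k in sequentially. f k < ereal e"
    show "liminf f = 0"
    proof (rule antisym)
      show "liminf f \<le> 0"
      proof (rule ccontr)
        assume "\<not> liminf f \<le> 0"
        then have "0 < liminf f" by simp
        then obtain e where e: "0 < ereal e" "ereal e < liminf f"
          using ereal_dense2 by blast
        from e(1) freq have "\<exists>\<^sub>F k in sequentially. f k < ereal e" by simp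
        moreover from e(2) have "\<forall>\<^sub>F k in sequentially. ereal e < f k" by (rule less_LiminfD)
        ultimately have "\<exists>\<^sub>F k in sequentially. f k < ereal e \<and> ereal e < f k"
          by (rule frequently_eventually_frequently)
        then show False by (auto dest: frequently_ex)
      qed
      show "0 \<le> liminf f"
        by (rule Liminf_bounded) (simp add: f_def set_dist_e_nonneg)
    qed
  qed
  then show ?thesis
    by (simp add: PK_limsup_def f_def set_dist_e_less_iff)
qed

lemma mem_PK_liminf_iff:
  "x \<in> PK_liminf Cs \<longleftrightarrow> (\<forall>e>0. \<forall>\<^sub>F k in sequentially. \<exists>z\<in>Cs k. dist x z < e)"
proof -
  define f where "f = (\<lambda>k. set_dist_e x (Cs k))"
  have "0 \<le> limsup f"
    by (rule le_Limsup) (simp_all add: f_def set_dist_e_nonneg)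
  then have "limsup f = 0 \<longleftrightarrow> limsup f \<le> 0" by auto
  also have "\<dots> \<longleftrightarrow> (\<forall>y>0. \<forall>\<^sub>F k in sequentially. f k < y)"
    by (rule Limsup_le_iff)
  also have "\<dots> \<longleftrightarrow> (\<forall>e>0. \<forall>\<^sub>F k in sequentially. f k < ereal e)"
  proof
    assume e: "\<forall>e>0. \<forall>\<^sub>F k in sequentially. f k < ereal e"
    show "\<forall>y>0. \<forall>\<^sub>F k in sequentially. f k < y"
    proof (intro allI impI)
      fix y :: ereal assume "y > 0"
      then obtain e where "0 < ereal e" "ereal e < y"
        using ereal_dense2 by blast
      with e have "\<forall>\<^sub>F k in sequentially. f k < ereal e" by simp
      with \<open>ereal e < y\<close> show "\<forall>\<^sub>F k in sequentially. f k < y"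
        by (auto elim: eventually_mono)
    qed
  qed simp
  finally show ?thesis
    by (simp add: PK_liminf_def f_def set_dist_e_less_iff)
qed

section \<open>Sets of first category\<close>

definition first_category :: "'a::topological_space set \<Rightarrow> bool" where
  "first_category S \<longleftrightarrow>
     (\<exists>\<D>. countable \<D> \<and> (\<forall>D\<in>\<D>. closed D \<and> interior D = {}) \<and> S \<subseteq> \<Union>\<D>)"

lemma first_category_subset: "first_category T \<Longrightarrow> S \<subseteq> T \<Longrightarrow> first_category S"
  unfolding first_category_def by (meson order_trans)

lemma first_category_Un:
  assumes "first_category S" "first_category T"
  shows "first_category (S \<union> T)"
proof -
  from assms(1)[unfolded first_category_def] obtain \<D>\<^sub>S where
    "countable \<D>\<^sub>S \<and> (\<forall>D\<in>\<D>\<^sub>S. closed D \<and> interior D = {}) \<and> S \<subseteq> \<Union>\<D>\<^sub>S" ..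
  moreover from assms(2)[unfolded first_category_def] obtain \<D>\<^sub>T where
    "countable \<D>\<^sub>T \<and> (\<forall>D\<in>\<D>\<^sub>T. closed D \<and> interior D = {}) \<and> T \<subseteq> \<Union>\<D>\<^sub>T" ..
  ultimately have "countable (\<D>\<^sub>S \<union> \<D>\<^sub>T) \<and> (\<forall>D\<in>\<D>\<^sub>S \<union> \<D>\<^sub>T. closed D \<and> interior D = {})
      \<and> S \<union> T \<subseteq> \<Union>(\<D>\<^sub>S \<union> \<D>\<^sub>T)"
    by (auto simp: Union_Un_distrib)
  then show ?thesis
    unfolding first_category_def ..
qed

lemma interior_first_category:
  fixes S :: "'a::complete_space set"
  assumes "first_category S"
  shows "interior S = {}"
proof -
  from assms[unfolded first_category_def] obtain \<D> where
    "countable \<D> \<and> (\<forall>D\<in>\<D>. closed D \<and> interior D = {}) \<and> S \<subseteq> \<Union>\<D>" ..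
  then have \<D>: "countable \<D>" "\<forall>D\<in>\<D>. closed D \<and> interior D = {}" "S \<subseteq> \<Union>\<D>"
    by auto
  have "euclidean interior_of \<Union>\<D> = {}"
  proof (rule Baire_category_alt)
    show "completely_metrizable_space (euclidean :: 'a topology) \<or>
        locally_compact_space (euclidean :: 'a topology) \<and> regular_space (euclidean :: 'a topology)"
      using completely_metrizable_space_euclidean by blast
    show "countable \<D>" by fact
    show "closedin euclidean D \<and> euclidean interior_of D = {}" if "D \<in> \<D>" for D
      using \<D>(2) that closed_closedin by auto
  qed
  then show ?thesis
    using interior_mono[OF \<D>(3)] by simp
qed

lemma interior_frontier_closed: "closed S \<Longrightarrow> interior (frontier S) = {}"
proof -
  assume "closed S"
  then have "interior (frontier S) \<subseteq> interior S"
    by (intro interior_mono) (simp add: frontier_subset_closed)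
  then show ?thesis
    using interior_subset[of "frontier S"] unfolding frontier_def by auto
qed

section \<open>Multifunctions with closed graph\<close>

lemma outer_semicont_rel_if_closed_graph:
  fixes F :: "'b::metric_space \<Rightarrow> 'a::metric_space set"
  assumes "closed {(s, z). z \<in> F s}"
  shows "outer_semicont_rel F XX t"
  unfolding outer_semicont_rel_def
proof (intro allI impI subsetI)
  fix xs x assume xs: "(\<forall>k. xs k \<in> XX) \<and> xs \<longlonglongrightarrow> t" and "x \<in> PK_limsup (\<lambda>k. F (xs k))"
  then have near: "\<exists>\<^sub>F k in sequentially. \<exists>z\<in>F (xs k). dist x z < e" if "e > 0" for e
    using that by (simp add: mem_PK_limsup_iff)
  show "x \<in> F t"
  proof (rule ccontr)
    assume "x \<notin> F t"
    then have "(t, x) \<in> - {(s, z). z \<in> F s}" by simp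
    with assms obtain U V where UV: "open U" "open V" "(t, x) \<in> U \<times> V" "U \<times> V \<subseteq> - {(s, z). z \<in> F s}"
      by (metis open_Compl open_prod_elim)
    then obtain e where "e > 0" "ball x e \<subseteq> V"
      by (auto elim: openE)
    have "\<forall>\<^sub>F k in sequentially. xs k \<in> U"
      using xs UV by (intro topological_tendstoD) auto
    with near[OF \<open>e > 0\<close>] have "\<exists>\<^sub>F k in sequentially. (\<exists>z\<in>F (xs k). dist x z < e) \<and> xs k \<in> U"
      by (rule frequently_eventually_frequently)
    then obtain k z where "xs k \<in> U" "z \<in> F (xs k)" "z \<in> V"
      using \<open>ball x e \<subseteq> V\<close> by (auto dest!: frequently_ex)
    with UV(4) show False by auto
  qed
qed

lemma not_inner_semicont_relE:
  fixes F :: "'b::metric_space \<Rightarrow> 'a::metric_space set"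
  assumes "\<not> inner_semicont_rel F XX t"
  obtains x e where "x \<in> F t" "e > 0" "\<And>K. K \<subseteq> ball x e \<Longrightarrow> t \<notin> interior {s. F s \<inter> K \<noteq> {}}"
proof -
  obtain xs x where xs: "xs \<longlonglongrightarrow> t" and "x \<in> F t" and "x \<notin> PK_liminf (\<lambda>k. F (xs k))"
    using assms unfolding inner_semicont_rel_def by blast
  then obtain e where "e > 0" and far: "\<exists>\<^sub>F k in sequentially. \<not> (\<exists>z\<in>F (xs k). dist x z < e)"
    by (auto simp: mem_PK_liminf_iff not_eventually)
  have "t \<notin> interior {s. F s \<inter> K \<noteq> {}}" if "K \<subseteq> ball x e" for K
  proof
    assume "t \<in> interior {s. F s \<inter> K \<noteq> {}}"
    then have "\<forall>\<^sub>F k in sequentially. xs k \<in> interior {s. F s \<inter> K \<noteq> {}}"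
      using xs by (intro topological_tendstoD) auto
    then have "\<forall>\<^sub>F k in sequentially. \<exists>z\<in>F (xs k). dist x z < e"
      by (rule eventually_mono) (use that interior_subset in fastforce)
    with far have "\<exists>\<^sub>F k in sequentially. \<not> (\<exists>z\<in>F (xs k). dist x z < e) \<and> (\<exists>z\<in>F (xs k). dist x z < e)"
      by (rule frequently_eventually_frequently)
    then show False
      by (auto dest: frequently_ex)
  qed
  with \<open>x \<in> F t\<close> \<open>e > 0\<close> show ?thesis by (rule that)
qed

lemma closed_hitting_set_if_closed_graph:
  fixes F :: "'b::euclidean_space \<Rightarrow> 'a::euclidean_space set"
  assumes "closed {(s, z). z \<in> F s}" and "compact K"
  shows "closed {s. F s \<inter> K \<noteq> {}}"
proof -
  have "closed (prod.swap -` {(s, z). z \<in> F s})"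
    using assms(1) by (intro continuous_closed_vimage) (auto intro: continuous_intros)
  then have "closed {s. \<exists>z. z \<in> K \<and> (z, s) \<in> prod.swap -` {(s, z). z \<in> F s}}"
    by (rule closed_compact_projection[OF assms(2)])
  moreover have "{s. F s \<inter> K \<noteq> {}} = {s. \<exists>z. z \<in> K \<and> (z, s) \<in> prod.swap -` {(s, z). z \<in> F s}}"
    by auto
  ultimately show ?thesis by simp
qed

lemma first_category_not_inner_semicont_rel:
  fixes F :: "'b::euclidean_space \<Rightarrow> 'a::euclidean_space set"
  assumes graph: "closed {(s, z). z \<in> F s}"
  shows "first_category {t. \<not> inner_semicont_rel F XX t}"
proof -
  obtain \<B> :: "'a set set" where \<B>: "countable \<B>" "\<And>U. U \<in> \<B> \<Longrightarrow> open U"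
      "\<And>S. open S \<Longrightarrow> \<exists>\<U>. \<U> \<subseteq> \<B> \<and> S = \<Union>\<U>"
    by (metis univ_second_countable)
  define hits where "hits U = {s. F s \<inter> closure U \<noteq> {}}" for U
  have closed_hits: "closed (hits U)" if "bounded U" for U
    unfolding hits_def using that by (intro closed_hitting_set_if_closed_graph graph) auto
  have "{t. \<not> inner_semicont_rel F XX t} \<subseteq> \<Union>((\<lambda>U. frontier (hits U)) ` {U \<in> \<B>. bounded U})"
  proof
    fix t assume "t \<in> {t. \<not> inner_semicont_rel F XX t}"
    then obtain x e where "x \<in> F t" "e > 0"
      and not_int: "\<And>K. K \<subseteq> ball x e \<Longrightarrow> t \<notin> interior {s. F s \<inter> K \<noteq> {}}"
      by (auto elim: not_inner_semicont_relE)
    obtain U where "U \<in> \<B>" "x \<in> U" "U \<subseteq> ball x (e/2)"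
      using \<B>(3)[of "ball x (e/2)"] \<open>e > 0\<close> by (metis Union_iff centre_in_ball half_gt_zero open_ball subsetD Sup_upper)
    then have "closure U \<subseteq> ball x e"
      using \<open>e > 0\<close> closure_mono[of U "cball x (e/2)"] by (fastforce simp: subset_eq)
    moreover have "bounded U"
      using \<open>U \<subseteq> ball x (e/2)\<close> bounded_ball bounded_subset by blast
    moreover have "t \<in> hits U"
      unfolding hits_def using \<open>x \<in> F t\<close> \<open>x \<in> U\<close> closure_subset by auto
    ultimately show "t \<in> \<Union>((\<lambda>U. frontier (hits U)) ` {U \<in> \<B>. bounded U})"
      using not_int closed_hits \<open>U \<in> \<B>\<close> unfolding hits_def by (auto simp: frontier_def)
  qed
  moreover have "countable ((\<lambda>U. frontier (hits U)) ` {U \<in> \<B>. bounded U})"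
    using \<B>(1) by simp
  moreover have "\<forall>D\<in>(\<lambda>U. frontier (hits U)) ` {U \<in> \<B>. bounded U}. closed D \<and> interior D = {}"
    using closed_hits interior_frontier_closed by auto
  ultimately show ?thesis
    unfolding first_category_def by blast
qed

lemma first_category_PK_discontinuities:
  fixes F :: "'b::euclidean_space \<Rightarrow> 'a::euclidean_space set"
  assumes "closed {(s, z). z \<in> F s}"
  shows "first_category {t. \<not> PK_cont_rel F XX t}"
proof (rule first_category_subset[OF first_category_not_inner_semicont_rel[OF assms]])
  show "{t. \<not> PK_cont_rel F XX t} \<subseteq> {t. \<not> inner_semicont_rel F XX t}"
    using outer_semicont_rel_if_closed_graph[OF assms] by (auto simp: PK_cont_rel_def)
qed

lemma tendsto_le_frequently:
  fixes f g :: "'a \<Rightarrow> real"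
  assumes "(f \<longlongrightarrow> a) F" "(g \<longlongrightarrow> b) F" "\<exists>\<^sub>F x in F. f x \<le> g x"
  shows "a \<le> b"
proof (rule ccontr)
  assume "\<not> a \<le> b"
  have "((\<lambda>x. f x - g x) \<longlongrightarrow> a - b) F"
    using assms(1,2) by (rule tendsto_diff)
  then have "\<forall>\<^sub>F x in F. 0 < f x - g x"
    using \<open>\<not> a \<le> b\<close> by (intro order_tendstoD(1)) auto
  with assms(3) have "\<exists>\<^sub>F x in F. f x \<le> g x \<and> 0 < f x - g x"
    by (rule frequently_eventually_frequently)
  then show False
    by (auto dest: frequently_ex)
qed

lemma frequently_between_limit_and_term:
  fixes s :: "nat \<Rightarrow> real"
  assumes "s \<longlonglongrightarrow> t" "\<exists>\<^sub>F k in sequentially. s k \<noteq> t"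
  obtains k0 where "s k0 \<noteq> t" "\<exists>\<^sub>F k in sequentially. s k \<in> closed_segment t (s k0)"
proof -
  have "\<exists>\<^sub>F k in sequentially. t < s k \<or> s k < t"
    using assms(2) by (rule frequently_elim1) auto
  then consider "\<exists>\<^sub>F k in sequentially. t < s k" | "\<exists>\<^sub>F k in sequentially. s k < t"
    by (auto simp: frequently_disj_iff)
  then show ?thesis
  proof cases
    case 1
    then obtain k0 where "t < s k0"
      by (auto dest: frequently_ex)
    with assms(1) have "\<forall>\<^sub>F k in sequentially. s k < s k0"
      by (rule order_tendstoD)
    with 1 have "\<exists>\<^sub>F k in sequentially. t < s k \<and> s k < s k0"
      by (rule frequently_eventually_frequently)
    then have "\<exists>\<^sub>F k in sequentially. s k \<in> closed_segment t (s k0)"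
      by (rule frequently_elim1) (auto simp: closed_segment_eq_real_ivl)
    with \<open>t < s k0\<close> show ?thesis
      by (intro that) auto
  next
    case 2
    then obtain k0 where "s k0 < t"
      by (auto dest: frequently_ex)
    with assms(1) have "\<forall>\<^sub>F k in sequentially. s k0 < s k"
      by (rule order_tendstoD)
    with 2 have "\<exists>\<^sub>F k in sequentially. s k < t \<and> s k0 < s k"
      by (rule frequently_eventually_frequently)
    then have "\<exists>\<^sub>F k in sequentially. s k \<in> closed_segment t (s k0)"
      by (rule frequently_elim1) (auto simp: closed_segment_eq_real_ivl)
    with \<open>s k0 < t\<close> show ?thesis
      by (intro that) auto
  qed
qed

text \<open>Convexity of the graph replaces continuity of the feasible sets: a point of \<open>G t\<close> is
  approached by convex combinations with a point of \<open>G (s k0)\<close>, where \<open>s k0\<close> lies on the same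
  side of \<open>t\<close> as infinitely many \<open>s k\<close>.\<close>

lemma convex_graph_frequently_approximable:
  fixes G :: "real \<Rightarrow> 'a::real_normed_vector set"
  assumes convex: "convex {(s, z). z \<in> G s}"
    and s: "s \<longlonglongrightarrow> t" and nonempty: "\<And>k. G (s k) \<noteq> {}" and "z' \<in> G t"
  obtains c where "c \<longlonglongrightarrow> z'" "\<exists>\<^sub>F k in sequentially. c k \<in> G (s k)"
proof (cases "\<exists>\<^sub>F k in sequentially. s k = t")
  case True
  then have "\<exists>\<^sub>F k in sequentially. z' \<in> G (s k)"
    by (rule frequently_elim1) (use \<open>z' \<in> G t\<close> in simp)
  with tendsto_const show ?thesis by (rule that)
next
  case False
  then have "\<exists>\<^sub>F k in sequentially. s k \<noteq> t"
    by (simp add: not_frequently eventually_frequently)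
  with s obtain k0 where "s k0 \<noteq> t" and between: "\<exists>\<^sub>F k in sequentially. s k \<in> closed_segment t (s k0)"
    by (rule frequently_between_limit_and_term)
  obtain z0 where "z0 \<in> G (s k0)"
    using nonempty by blast
  define u where "u k = (s k - t) / (s k0 - t)" for k
  define c where "c k = (1 - u k) *\<^sub>R z' + u k *\<^sub>R z0" for k
  have "u \<longlonglongrightarrow> (t - t) / (s k0 - t)"
    unfolding u_def using \<open>s k0 \<noteq> t\<close> by (intro tendsto_intros s) simp
  then have "c \<longlonglongrightarrow> (1 - 0) *\<^sub>R z' + 0 *\<^sub>R z0"
    unfolding c_def by (intro tendsto_intros) simp_all
  moreover have "\<exists>\<^sub>F k in sequentially. c k \<in> G (s k)"
    using between
  proof (rule frequently_elim1)
    fix k assume "s k \<in> closed_segment t (s k0)"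
    then obtain v where v: "0 \<le> v" "v \<le> 1" "s k = (1 - v) * t + v * s k0"
      by (auto simp: closed_segment_def)
    then have "u k = v"
      using \<open>s k0 \<noteq> t\<close> by (simp add: u_def field_simps)
    then have "(s k, c k) = (1 - v) *\<^sub>R (t, z') + v *\<^sub>R (s k0, z0)"
      by (simp add: c_def v(3))
    also have "\<dots> \<in> {(s, z). z \<in> G s}"
      using \<open>z' \<in> G t\<close> \<open>z0 \<in> G (s k0)\<close> v by (intro convexD_alt[OF convex]) auto
    finally show "c k \<in> G (s k)" by simp
  qed
  ultimately show ?thesis by (intro that) simp_all
qed

lemma closed_graph_argmax_if_convex_graph:
  fixes G :: "real \<Rightarrow> 'a::real_normed_vector set" and \<phi> :: "'a \<Rightarrow> real"
  assumes convex: "convex {(s, z). z \<in> G s}" and closed: "closed {(s, z). z \<in> G s}"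
    and cont: "\<And>z. isCont \<phi> z"
  shows "closed {(s, z). z \<in> G s \<and> (\<forall>z'\<in>G s. \<phi> z' \<le> \<phi> z)}"
  unfolding closed_sequential_limits
proof (intro allI impI, elim conjE)
  fix p and l :: "real \<times> 'a"
  assume p: "\<forall>k. p k \<in> {(s, z). z \<in> G s \<and> (\<forall>z'\<in>G s. \<phi> z' \<le> \<phi> z)}" and "p \<longlonglongrightarrow> l"
  define s where "s = fst \<circ> p"
  define z where "z = snd \<circ> p"
  obtain t w where l: "l = (t, w)" by fastforce
  have s: "s \<longlonglongrightarrow> t" and z: "z \<longlonglongrightarrow> w"
    using tendsto_fst[OF \<open>p \<longlonglongrightarrow> l\<close>] tendsto_snd[OF \<open>p \<longlonglongrightarrow> l\<close>] by (simp_all add: s_def z_def l o_def)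
  have G: "z k \<in> G (s k)" and opt: "\<And>z'. z' \<in> G (s k) \<Longrightarrow> \<phi> z' \<le> \<phi> (z k)" for k
    using p[rule_format, of k] by (auto simp: s_def z_def split: prod.splits)
  have "(t, w) \<in> {(s, z). z \<in> G s}"
    by (rule closed_sequentially[OF closed _ tendsto_Pair[OF s z]]) (use G in blast)
  moreover have "\<phi> z' \<le> \<phi> w" if "z' \<in> G t" for z'
  proof -
    obtain c where "c \<longlonglongrightarrow> z'" and c: "\<exists>\<^sub>F k in sequentially. c k \<in> G (s k)"
      using convex_graph_frequently_approximable[OF convex s _ \<open>z' \<in> G t\<close>] G by blast
    have "(\<lambda>k. \<phi> (c k)) \<longlonglongrightarrow> \<phi> z'"
      using cont \<open>c \<longlonglongrightarrow> z'\<close> by (rule isCont_tendsto_compose)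
    moreover have "(\<lambda>k. \<phi> (z k)) \<longlonglongrightarrow> \<phi> w"
      using cont z by (rule isCont_tendsto_compose)
    moreover from c have "\<exists>\<^sub>F k in sequentially. \<phi> (c k) \<le> \<phi> (z k)"
      by (rule frequently_elim1) (rule opt)
    ultimately show ?thesis
      by (rule tendsto_le_frequently)
  qed
  ultimately show "l \<in> {(s, z). z \<in> G s \<and> (\<forall>z'\<in>G s. \<phi> z' \<le> \<phi> z)}"
    by (simp add: l)
qed

lemma closed_graph_argmin:
  fixes f :: "'a::topological_space \<times> 'b::topological_space \<Rightarrow> real"
  assumes "continuous_on UNIV f" and "closed K"
  shows "closed {(s, x). x \<in> K \<and> (\<forall>x'\<in>K. f (s, x) \<le> f (s, x'))}"
proof -
  have "{(s, x). x \<in> K \<and> (\<forall>x'\<in>K. f (s, x) \<le> f (s, x'))}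
      = snd -` K \<inter> (\<Inter>x'\<in>K. {p. f p \<le> f (fst p, x')})"
    by auto
  moreover have "closed {p. f p \<le> f (fst p, x')}" for x'
    by (intro closed_Collect_le assms(1) continuous_on_compose2[OF assms(1)] continuous_intros) auto
  ultimately show ?thesis
    using assms(2) by (auto intro!: closed_INT continuous_closed_vimage continuous_intros)
qed

section \<open>Optimal set mappings of the parametric semidefinite program\<close>

lemma continuous_on_mat_inner [continuous_intros]:
  fixes f g :: "'a::topological_space \<Rightarrow> real^'n^'n"
  assumes "continuous_on S f" "continuous_on S g"
  shows "continuous_on S (\<lambda>x. mat_inner (f x) (g x))"
  unfolding mat_inner_def trace_def matrix_matrix_mult_def
  using assms by (auto intro!: continuous_intros)

lemma closed_psd: "closed {X :: real^'n^'n. psd X}"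
proof -
  have "{X :: real^'n^'n. psd X} =
      {X. \<forall>i j. X $ j $ i = X $ i $ j} \<inter> {X. \<forall>x. 0 \<le> x \<bullet> (X *v x)}"
    by (auto simp: psd_def symmetric_mat_def transpose_def vec_eq_iff)
  moreover have "closed {X :: real^'n^'n. \<forall>i j. X $ j $ i = X $ i $ j}"
    by (intro closed_Collect_all closed_Collect_eq continuous_intros)
  moreover have "continuous_on UNIV (\<lambda>X :: real^'n^'n. x \<bullet> (X *v x))" for x
    unfolding inner_vec_def matrix_vector_mult_def by (auto intro!: continuous_intros)
  then have "closed {X :: real^'n^'n. \<forall>x. 0 \<le> x \<bullet> (X *v x)}"
    by (intro closed_Collect_all closed_Collect_le continuous_on_const)
  ultimately show ?thesis
    by (simp add: closed_Int)
qed

lemma convex_psd: "convex {X :: real^'n^'n. psd X}"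
  unfolding psd_def symmetric_mat_def
  by (rule convexI) (auto simp: transpose_def vec_eq_iff matrix_vector_mult_add_rdistrib
      scaleR_matrix_vector_assoc[symmetric] inner_add_right)

lemma closed_primal_feasible: "closed (primal_feasible A b)"
  unfolding primal_feasible_def
  using closed_psd by (auto intro!: closed_Collect_conj closed_Collect_all closed_Collect_eq continuous_intros)

lemma closed_graph_primal_opt:
  fixes C Cb :: "real^'n^'n" and A :: "'m::finite \<Rightarrow> real^'n^'n"
  shows "closed {(s, X). X \<in> primal_opt C Cb A b s}"
proof -
  define f where "f p = mat_inner (C + fst p *\<^sub>R Cb) (snd p)" for p :: "real \<times> (real^'n^'n)"
  have "continuous_on UNIV f"
    unfolding f_def by (intro continuous_intros)
  then have "closed {(s, X). X \<in> primal_feasible A b \<and> (\<forall>X'\<in>primal_feasible A b. f (s, X) \<le> f (s, X'))}"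
    by (intro closed_graph_argmin closed_primal_feasible)
  then show ?thesis
    by (simp add: primal_opt_def f_def)
qed

lemma graph_dual_feasible_eq:
  fixes C Cb :: "real^'n^'n" and A :: "'m::finite \<Rightarrow> real^'n^'n"
  shows "{(s, z). z \<in> dual_feasible C Cb A s} =
     {p. (\<Sum>i\<in>UNIV. fst (snd p) $ i *\<^sub>R A i) + snd (snd p) = C + fst p *\<^sub>R Cb} \<inter> snd -` snd -` {S. psd S}"
  by (auto simp: dual_feasible_def)

lemma closed_graph_dual_feasible:
  fixes C Cb :: "real^'n^'n" and A :: "'m::finite \<Rightarrow> real^'n^'n"
  shows "closed {(s, z). z \<in> dual_feasible C Cb A s}"
  unfolding graph_dual_feasible_eq using closed_psd
  by (intro closed_Int closed_Collect_eq continuous_closed_vimage) (auto intro!: continuous_intros)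

lemma convex_graph_dual_feasible:
  fixes C Cb :: "real^'n^'n" and A :: "'m::finite \<Rightarrow> real^'n^'n"
  shows "convex {(s, z). z \<in> dual_feasible C Cb A s}"
  unfolding graph_dual_feasible_eq
proof (rule convex_Int)
  show "convex (snd -` snd -` {S. psd S})"
    using convex_psd by (intro convex_linear_vimage) (auto intro: linear_snd)
  let ?L = "\<lambda>p. (\<Sum>i\<in>UNIV. fst (snd p) $ i *\<^sub>R A i) + snd (snd p)"
  show "convex {p. ?L p = C + fst p *\<^sub>R Cb}"
  proof (rule convexI)
    fix p q :: "real \<times> (real^'m) \<times> (real^'n^'n)" and u v :: real
    assume "p \<in> {p. ?L p = C + fst p *\<^sub>R Cb}" "q \<in> {p. ?L p = C + fst p *\<^sub>R Cb}" "u + v = 1"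
    have "?L (u *\<^sub>R p + v *\<^sub>R q) = u *\<^sub>R ?L p + v *\<^sub>R ?L q"
      by (simp add: algebra_simps sum.distrib scaleR_sum_right)
    also have "\<dots> = u *\<^sub>R (C + fst p *\<^sub>R Cb) + v *\<^sub>R (C + fst q *\<^sub>R Cb)"
      using \<open>p \<in> _\<close> \<open>q \<in> _\<close> by simp
    also have "\<dots> = (u + v) *\<^sub>R C + fst (u *\<^sub>R p + v *\<^sub>R q) *\<^sub>R Cb"
      by (simp add: algebra_simps)
    finally show "u *\<^sub>R p + v *\<^sub>R q \<in> {p. ?L p = C + fst p *\<^sub>R Cb}"
      using \<open>u + v = 1\<close> by simp
  qed
qed

lemma closed_graph_dual_opt:
  fixes C Cb :: "real^'n^'n" and A :: "'m::finite \<Rightarrow> real^'n^'n"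
  shows "closed {(s, z). z \<in> dual_opt C Cb A b s}"
proof -
  have "closed {(s, z). z \<in> dual_feasible C Cb A s \<and>
      (\<forall>z'\<in>dual_feasible C Cb A s. b \<bullet> fst z' \<le> b \<bullet> fst z)}"
    by (intro closed_graph_argmax_if_convex_graph convex_graph_dual_feasible closed_graph_dual_feasible
        continuous_intros)
  then show ?thesis
    by (simp add: dual_opt_def case_prod_beta)
qed

theorem proposition2:
  fixes C Cb :: "real^'n^'n" and A :: "'m::finite \<Rightarrow> real^'n^'n" and b :: "real^'m"
  assumes symC: "symmetric_mat C" and symCb: "symmetric_mat Cb"
    and symA: "\<forall>i. symmetric_mat (A i)"
    and indep: "inj A" "independent (range A)"
    and slater_P: "\<exists>X. pd X \<and> (\<forall>i. mat_inner (A i) X = b $ i)"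
    and slater_D: "\<exists>y S. pd S \<and> (\<Sum>i\<in>UNIV. y $ i *\<^sub>R A i) + S = C"
  shows "interior {eps \<in> interior (finite_value_set C Cb A b).
           \<not> (PK_cont_rel (primal_opt C Cb A b) (interior (finite_value_set C Cb A b)) eps
              \<and> PK_cont_rel (dual_opt C Cb A b) (interior (finite_value_set C Cb A b)) eps)} = {}"
proof -
  let ?I = "interior (finite_value_set C Cb A b)"
  have "first_category ({eps. \<not> PK_cont_rel (primal_opt C Cb A b) ?I eps}
      \<union> {eps. \<not> PK_cont_rel (dual_opt C Cb A b) ?I eps})"
    by (intro first_category_Un first_category_PK_discontinuities
        closed_graph_primal_opt closed_graph_dual_opt)
  then have "first_category {eps \<in> ?I. \<not> (PK_cont_rel (primal_opt C Cb A b) ?I eps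
      \<and> PK_cont_rel (dual_opt C Cb A b) ?I eps)}"
    by (rule first_category_subset) auto
  then show ?thesis
    by (rule interior_first_category)
qed

end
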